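(* Let $m\in\{2,3,4,\dots\}$, $R>0$, and let $w\in C^1((0,\infty))$ with $w(y)>0$ for $y\ge R$. Define, for $r,t>0$ and $0\le\eta,\xi\le1$, $$K(r,t,\eta,\xi)=\frac{(r+t\eta-2t\eta\xi)^m}{\sqrt{r+t\eta-t\eta\xi}\,\sqrt{r-\xi t\eta}},\qquad \Theta(r,t,\eta,\xi)=\frac{(r+t\eta-2t\eta\xi)^2+r^2-t^2\eta^2}{2r(r+t\eta-2t\eta\xi)}.$$ Then for all $0\le\xi,\eta\le1$ and $(r,t)\in\Sigma_1:=\{(r,t)\in(0,\infty)^2: r-t\ge\max\{R,\delta t\}>0\}$, $$\frac{\partial}{\partial t}\Big\{K(r,t,\eta,\xi)\,w(r+t\eta-2t\eta\xi)\,T_{m-1}(\Theta(r,t,\eta,\xi))\Big\}\ge-\Big\{E_m\frac{w(r+t\eta-2t\eta\xi)}{r+t\eta-2t\eta\xi}+|w'(r+t\eta-2t\eta\xi)|\Big\}K(r,t,\eta,\xi),$$ where $E_m=m+\frac18+\frac{5\zeta_m(m-1)^2}{3}$.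
   Context: $T_{m-1}$ is the Chebyshev polynomial $T_k(z)=\frac{(-1)^k}{(2k-1)!!}(1-z^2)^{1/2}\frac{d^k}{dz^k}(1-z^2)^{k-1/2}$ with $k=m-1$. $\zeta_m\in(0,1]$ is a fixed constant depending only on $m$ such that $\frac12\le T_{m-1}(z)\le1$ and $0<T'_{m-1}(z)\le(m-1)^2$ for $\frac1{1+\zeta_m}\le z\le1$; $\eta_m\in(0,1]$ is a fixed constant depending only on $m$ such that the Legendre polynomial $P_{m-1}(z)=\frac{1}{2^{m-1}(m-1)!}\frac{d^{m-1}}{dz^{m-1}}(z^2-1)^{m-1}$ satisfies $P_{m-1}(z)\ge\frac12$ and $0<P'_{m-1}(z)\le\frac12m(m-1)$ for $\frac1{1+\eta_m}\le z\le1$; and $\delta=\max\{2/\eta_m,2/\zeta_m\}$. *)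

theory Defs
  imports "HOL-Analysis.Analysis" "HOL-Computational_Algebra.Polynomial"
begin

text \<open>Chebyshev polynomials of the first kind, via the standard three-term recurrence
  (equivalent to the Rodrigues-type formula in the paper).\<close>
fun chebyshev_poly :: "nat \<Rightarrow> real poly" where
  "chebyshev_poly 0 = 1"
| "chebyshev_poly (Suc 0) = [:0, 1:]"
| "chebyshev_poly (Suc (Suc k)) = [:0, 2:] * chebyshev_poly (Suc k) - chebyshev_poly k"

definition chebT :: "nat \<Rightarrow> real \<Rightarrow> real" where
  "chebT k z = poly (chebyshev_poly k) z"

definition chebT' :: "nat \<Rightarrow> real \<Rightarrow> real" where
  "chebT' k z = poly (pderiv (chebyshev_poly k)) z"

definition legendre_poly :: "nat \<Rightarrow> real poly" where
  "legendre_poly n = smult (1 / (2 ^ n * fact n)) ((pderiv ^^ n) ([:-1, 0, 1:] ^ n))"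

definition legP :: "nat \<Rightarrow> real \<Rightarrow> real" where
  "legP n z = poly (legendre_poly n) z"

definition legP' :: "nat \<Rightarrow> real \<Rightarrow> real" where
  "legP' n z = poly (pderiv (legendre_poly n)) z"

definition kerK :: "nat \<Rightarrow> real \<Rightarrow> real \<Rightarrow> real \<Rightarrow> real \<Rightarrow> real" where
  "kerK m r t \<eta> \<xi> = (r + t*\<eta> - 2*t*\<eta>*\<xi>) ^ m /
      (sqrt (r + t*\<eta> - t*\<eta>*\<xi>) * sqrt (r - \<xi>*t*\<eta>))"

definition Theta :: "real \<Rightarrow> real \<Rightarrow> real \<Rightarrow> real \<Rightarrow> real" where
  "Theta r t \<eta> \<xi> = ((r + t*\<eta> - 2*t*\<eta>*\<xi>)^2 + r^2 - t^2*\<eta>^2) /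
      (2*r*(r + t*\<eta> - 2*t*\<eta>*\<xi>))"

definition E_const :: "nat \<Rightarrow> real \<Rightarrow> real" where
  "E_const m \<zeta> = real m + 1/8 + 5 * \<zeta> * (real m - 1)^2 / 3"

end

theory Submission
  imports Defs
begin

text \<open>
  Write \<open>y = r + t\<eta>(1 - 2\<xi>)\<close> and differentiate the product \<open>K \<cdot> w(y) \<cdot> T\<^bsub>m-1\<^esub>(\<Theta>)\<close> in \<open>t\<close>.
  The logarithmic derivative of \<open>K\<close> is at least \<open>-m/y\<close>, because the two square roots in
  the denominator sit at points \<open>a, b\<close> with \<open>y \<le> a\<close> and \<open>b \<le> a\<close>; the weight contributes
  \<open>w'(y) \<eta>(1 - 2\<xi>) \<ge> -|w'(y)|\<close>. On \<open>\<Sigma>\<^sub>1\<close> one has \<open>2t \<le> \<zeta> r\<close> and \<open>y \<ge> 2t\<close>, so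
  \<open>\<Theta> = 1 - 2\<xi>(1-\<xi>)(t\<eta>)\<^sup>2/(r y)\<close> stays in \<open>[1/(1+\<zeta>), 1]\<close>, where \<open>T\<^bsub>m-1\<^esub> \<in> [1/2, 1]\<close> and
  \<open>0 < T'\<^bsub>m-1\<^esub> \<le> (m-1)\<^sup>2\<close>, while \<open>\<partial>\<^sub>t\<Theta> \<ge> -(3\<zeta>/4)/y\<close>. Since \<open>K\<close> and \<open>w(y)\<close> are positive,
  the three contributions add up to the claimed bound with room to spare.
\<close>

lemma mult_one_minus_le_quarter: "x * (1 - x) \<le> (1/4 :: real)"
proof -
  have "0 \<le> (2*x - 1)^2"
    by simp
  then show ?thesis
    by (simp add: algebra_simps power2_eq_square)
qed

lemma mult_unit_interval_lower_bound:
  fixes T B M :: real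
  assumes "0 \<le> T" "T \<le> 1" "0 \<le> M" "- M \<le> B"
  shows "- M \<le> T * B"
proof (cases "B \<ge> 0")
  case True
  then show ?thesis
    using assms mult_nonneg_nonneg[of T B] by linarith
next
  case False
  then have "B \<le> T * B"
    using assms mult_right_mono_neg[of T 1 B] by simp
  then show ?thesis
    using assms by linarith
qed

lemma DERIV_power_div_sqrt_mult:
  fixes Y A B :: "real \<Rightarrow> real"
  assumes dY: "(Y has_real_derivative Y') (at t)"
    and dA: "(A has_real_derivative A') (at t)"
    and dB: "(B has_real_derivative B') (at t)"
    and pos: "Y t > 0" "A t > 0" "B t > 0"
  shows "((\<lambda>\<tau>. Y \<tau> ^ m / (sqrt (A \<tau>) * sqrt (B \<tau>))) has_real_derivative
           Y t ^ m / (sqrt (A t) * sqrt (B t)) * (m * Y' / Y t - (A' / A t + B' / B t) / 2)) (at t)"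
proof -
  define a b where "a = sqrt (A t)" and "b = sqrt (B t)"
  have ab: "a > 0" "b > 0" "A t = a\<^sup>2" "B t = b\<^sup>2"
    using pos by (auto simp: a_def b_def)
  have dpow: "((\<lambda>\<tau>. Y \<tau> ^ m) has_real_derivative m * Y t ^ m / Y t * Y') (at t)"
    using DERIV_power[OF dY, of m] pos by (cases m) (auto simp: mult_ac)
  have "((\<lambda>\<tau>. Y \<tau> ^ m / (sqrt (A \<tau>) * sqrt (B \<tau>))) has_real_derivative
          (m * Y t ^ m / Y t * Y' * (a * b) - Y t ^ m * (inverse a / 2 * A' * b + inverse b / 2 * B' * a))
          / (a * b * (a * b))) (at t)"
    unfolding a_def b_def
    using pos by (intro DERIV_divide DERIV_mult DERIV_chain2[OF DERIV_real_sqrt] dpow dA dB) auto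
  then show ?thesis
    using pos ab by (simp add: a_def[symmetric] b_def[symmetric] field_simps power2_eq_square)
qed

lemma shift_bounds:
  fixes r t \<eta> \<xi> :: real
  assumes "0 \<le> t" "0 \<le> \<eta>" "\<eta> \<le> 1" "0 \<le> \<xi>" "\<xi> \<le> 1"
  shows "r - t \<le> r + t*\<eta> - 2*t*\<eta>*\<xi>" "r + t*\<eta> - 2*t*\<eta>*\<xi> \<le> r + t*\<eta> - t*\<eta>*\<xi>"
    "r - t \<le> r - \<xi>*t*\<eta>"
proof -
  have "t*\<eta>*(-1) \<le> t*\<eta>*(1 - 2*\<xi>)"
    using assms by (intro mult_left_mono) auto
  moreover have "t*\<eta> \<le> t" "t*\<eta>*\<xi> \<le> t*\<eta>" "0 \<le> t*\<eta>*\<xi>"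
    using assms by (auto simp: mult_left_le)
  ultimately show "r - t \<le> r + t*\<eta> - 2*t*\<eta>*\<xi>" "r + t*\<eta> - 2*t*\<eta>*\<xi> \<le> r + t*\<eta> - t*\<eta>*\<xi>"
    "r - t \<le> r - \<xi>*t*\<eta>"
    by (simp_all add: algebra_simps)
qed

lemma Sigma1_scale_bounds:
  fixes \<zeta> \<delta> r t :: real
  assumes "0 < \<zeta>" "\<zeta> \<le> 1" "0 < t" "2 / \<zeta> \<le> \<delta>" "\<delta> * t \<le> r - t"
  shows "2*t \<le> \<zeta>*r" "3*t \<le> r"
proof -
  have "2 / \<zeta> * t \<le> r - t"
    using mult_right_mono[OF assms(4), of t] assms(3,5) by simp
  then have Sigma: "2*t \<le> \<zeta>*(r - t)"
    using assms(1) by (simp add: pos_divide_le_eq mult.commute)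
  then have "0 < \<zeta>*(r - t)"
    using assms(3) by linarith
  then have "\<zeta>*(r - t) \<le> r - t"
    using assms by (intro mult_left_le_one_le) (auto simp: zero_less_mult_iff)
  moreover have "0 < \<zeta>*t"
    using assms by simp
  ultimately show "2*t \<le> \<zeta>*r" "3*t \<le> r"
    using Sigma unfolding right_diff_distrib by linarith+
qed

lemma has_real_derivative_kerK:
  fixes r t \<eta> \<xi> :: real
  defines "y \<equiv> r + t*\<eta> - 2*t*\<eta>*\<xi>" and "a \<equiv> r + t*\<eta> - t*\<eta>*\<xi>" and "b \<equiv> r - \<xi>*t*\<eta>"
  assumes "y > 0" "a > 0" "b > 0"
  shows "((\<lambda>\<tau>. kerK m r \<tau> \<eta> \<xi>) has_real_derivative
           kerK m r t \<eta> \<xi> * (m * (\<eta> - 2*\<eta>*\<xi>) / y - ((\<eta> - \<eta>*\<xi>) / a - \<xi>*\<eta> / b) / 2)) (at t)"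
proof -
  have "((\<lambda>\<tau>. r + \<tau>*\<eta> - 2*\<tau>*\<eta>*\<xi>) has_real_derivative \<eta> - 2*\<eta>*\<xi>) (at t)"
    "((\<lambda>\<tau>. r + \<tau>*\<eta> - \<tau>*\<eta>*\<xi>) has_real_derivative \<eta> - \<eta>*\<xi>) (at t)"
    "((\<lambda>\<tau>. r - \<xi>*\<tau>*\<eta>) has_real_derivative - \<xi>*\<eta>) (at t)"
    by (auto intro!: derivative_eq_intros)
  from DERIV_power_div_sqrt_mult[OF this assms(4-6)[unfolded y_def a_def b_def], of m]
  show ?thesis
    by (simp add: kerK_def y_def a_def b_def)
qed

lemma kerK_log_derivative_lower_bound:
  fixes m r t \<eta> \<xi> :: real
  defines "y \<equiv> r + t*\<eta> - 2*t*\<eta>*\<xi>" and "a \<equiv> r + t*\<eta> - t*\<eta>*\<xi>" and "b \<equiv> r - \<xi>*t*\<eta>"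
  assumes "m \<ge> 1" and t: "0 \<le> t" and \<eta>: "0 \<le> \<eta>" "\<eta> \<le> 1" and \<xi>: "0 \<le> \<xi>" "\<xi> \<le> 1"
    and pos: "y > 0" "b > 0"
  shows "m * (\<eta> - 2*\<eta>*\<xi>) / y - ((\<eta> - \<eta>*\<xi>) / a - \<xi>*\<eta> / b) / 2 \<ge> - m / y"
proof -
  define c where "c = \<eta> - 2*\<eta>*\<xi>"
  have "y \<le> a" "b \<le> a"
    using t \<eta> \<xi> by (auto simp: y_def a_def b_def)
  then have "\<xi>*\<eta> / a \<le> \<xi>*\<eta> / b"
    using pos \<eta> \<xi> by (intro divide_left_mono) simp_all
  then have "(\<eta> - \<eta>*\<xi>) / a - \<xi>*\<eta> / b \<le> c / a"
    by (simp add: c_def diff_divide_distrib algebra_simps)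
  then have lower: "m * c / y - c / a / 2 \<le> m * (\<eta> - 2*\<eta>*\<xi>) / y - ((\<eta> - \<eta>*\<xi>) / a - \<xi>*\<eta> / b) / 2"
    unfolding c_def[symmetric] by (intro diff_left_mono divide_right_mono) simp_all
  have "0 < a"
    using pos \<open>b \<le> a\<close> by linarith
  show ?thesis
  proof (cases "c \<ge> 0")
    case True
    have "c / a / 2 \<le> c / a"
      using True \<open>0 < a\<close> by (simp add: field_simps)
    also have "\<dots> \<le> c / y"
      using True \<open>y \<le> a\<close> pos by (intro divide_left_mono) simp_all
    also have "\<dots> \<le> m * c / y"
      using True pos \<open>m \<ge> 1\<close> by (intro divide_right_mono) (auto simp: mult_le_cancel_right1)
    finally have "c / a / 2 \<le> m * c / y" .
    moreover have "0 \<le> m / y"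
      using pos \<open>m \<ge> 1\<close> by simp
    ultimately show ?thesis
      using lower by linarith
  next
    case False
    have "\<eta> * (-1) \<le> \<eta> * (1 - 2*\<xi>)"
      using \<eta> \<xi> by (intro mult_left_mono) auto
    then have "-1 \<le> c"
      using \<eta> by (simp add: c_def algebra_simps)
    then have "- m \<le> m * c"
      using \<open>m \<ge> 1\<close> mult_left_mono[of "-1" c m] by simp
    then have "- m / y \<le> m * c / y"
      using pos by (intro divide_right_mono) auto
    moreover have "c / a / 2 \<le> 0"
      using False \<open>0 < a\<close> by (simp add: divide_nonpos_pos)
    ultimately show ?thesis
      using lower by linarith
  qed
qed

lemma Theta_eq:
  fixes r t \<eta> \<xi> :: real
  defines "y \<equiv> r + t*\<eta> - 2*t*\<eta>*\<xi>"
  assumes "r \<noteq> 0" "y \<noteq> 0"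
  shows "Theta r t \<eta> \<xi> = 1 - 2*\<xi>*(1 - \<xi>)*(t*\<eta>)^2 / (r*y)"
proof -
  have "Theta r t \<eta> \<xi> = (y^2 + r^2 - t^2*\<eta>^2) / (2*r*y)"
    by (simp add: Theta_def y_def)
  also have "y^2 + r^2 - t^2*\<eta>^2 = 2*r*y - 4*\<xi>*(1 - \<xi>)*(t*\<eta>)^2"
    by (simp add: y_def algebra_simps power2_eq_square)
  finally show ?thesis
    using assms(2,3) by (simp add: field_simps)
qed

lemma has_real_derivative_Theta:
  fixes r t \<eta> \<xi> :: real
  defines "y \<equiv> r + t*\<eta> - 2*t*\<eta>*\<xi>"
  assumes "r \<noteq> 0" "y \<noteq> 0"
  shows "((\<lambda>\<tau>. Theta r \<tau> \<eta> \<xi>) has_real_derivative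
           - 2*\<xi>*(1 - \<xi>)*\<eta>^2*t*(2*y - t*\<eta>*(1 - 2*\<xi>)) / (r*y^2)) (at t)"
proof -
  have "((\<lambda>\<tau>. Theta r \<tau> \<eta> \<xi>) has_real_derivative
      ((2*((\<eta> - 2*\<eta>*\<xi>)*y) - 2*t*\<eta>^2)*(2*r*y) - (y^2 + r^2 - t^2*\<eta>^2)*((\<eta> - 2*\<eta>*\<xi>)*(2*r)))
        / (2*r*y*(2*r*y))) (at t)"
    unfolding Theta_def y_def using assms(2,3)
    by (auto intro!: derivative_eq_intros simp: y_def)
  also have "(2*((\<eta> - 2*\<eta>*\<xi>)*y) - 2*t*\<eta>^2)*(2*r*y) - (y^2 + r^2 - t^2*\<eta>^2)*((\<eta> - 2*\<eta>*\<xi>)*(2*r))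
      = - 8*r*(\<xi>*(1 - \<xi>)*\<eta>^2*t*(2*y - t*\<eta>*(1 - 2*\<xi>)))"
    by (simp add: y_def algebra_simps power2_eq_square)
  also have "- 8*r*(\<xi>*(1 - \<xi>)*\<eta>^2*t*(2*y - t*\<eta>*(1 - 2*\<xi>))) / (2*r*y*(2*r*y))
      = - 2*\<xi>*(1 - \<xi>)*\<eta>^2*t*(2*y - t*\<eta>*(1 - 2*\<xi>)) / (r*y^2)"
    using assms(2,3) by (simp add: field_simps power2_eq_square)
  finally show ?thesis .
qed

lemma Theta_bounds:
  fixes \<zeta> r t \<eta> \<xi> :: real
  assumes "0 < \<zeta>" "\<zeta> \<le> 1" "0 < t" "2*t \<le> \<zeta>*r" "3*t \<le> r"
    and \<eta>: "0 \<le> \<eta>" "\<eta> \<le> 1" and \<xi>: "0 \<le> \<xi>" "\<xi> \<le> 1"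
  shows "1 / (1 + \<zeta>) \<le> Theta r t \<eta> \<xi>" "Theta r t \<eta> \<xi> \<le> 1"
proof -
  define y where "y = r + t*\<eta> - 2*t*\<eta>*\<xi>"
  define d where "d = 2*\<xi>*(1 - \<xi>)*(t*\<eta>)^2 / (r*y)"
  have "r - t \<le> y"
    unfolding y_def using assms by (intro shift_bounds(1)) auto
  then have "t \<le> y" "0 < r" "0 < y"
    using assms by linarith+
  have Theta: "Theta r t \<eta> \<xi> = 1 - d"
    unfolding d_def y_def using \<open>0 < r\<close> \<open>0 < y\<close> by (intro Theta_eq) (auto simp: y_def)
  have "0 \<le> d"
    unfolding d_def using \<xi> \<open>0 < r\<close> \<open>0 < y\<close> by simp
  have "(t*\<eta>)^2 \<le> t^2"
    using assms by (intro power_mono) (auto simp: mult_left_le)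
  then have "\<xi>*(1 - \<xi>)*(t*\<eta>)^2 \<le> 1/4*t^2"
    using mult_one_minus_le_quarter[of \<xi>] by (intro mult_mono) auto
  then have "2*\<xi>*(1 - \<xi>)*(t*\<eta>)^2 \<le> t^2/2"
    by linarith
  also have "\<dots> \<le> t*y/2"
    using \<open>t \<le> y\<close> \<open>0 < t\<close> by (simp add: power2_eq_square)
  finally have "d \<le> (t*y/2) / (r*y)"
    unfolding d_def using \<open>0 < r\<close> \<open>0 < y\<close> by (intro divide_right_mono) auto
  also have "\<dots> = t / (2*r)"
    using \<open>0 < y\<close> by simp
  also have "\<dots> \<le> \<zeta> / 4"
    using assms \<open>0 < r\<close> by (simp add: field_simps)
  also have "\<dots> \<le> \<zeta> / (1 + \<zeta>)"
    using assms by (intro divide_left_mono) auto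
  finally have "d \<le> \<zeta> / (1 + \<zeta>)" .
  moreover have "1 / (1 + \<zeta>) = 1 - \<zeta> / (1 + \<zeta>)"
    using assms by (simp add: field_simps)
  ultimately show "1 / (1 + \<zeta>) \<le> Theta r t \<eta> \<xi>" "Theta r t \<eta> \<xi> \<le> 1"
    using Theta \<open>0 \<le> d\<close> by linarith+
qed

lemma Theta_derivative_lower_bound:
  fixes \<zeta> r t \<eta> \<xi> :: real
  defines "y \<equiv> r + t*\<eta> - 2*t*\<eta>*\<xi>"
  assumes "0 < t" "2*t \<le> \<zeta>*r" "3*t \<le> r"
    and \<eta>: "0 \<le> \<eta>" "\<eta> \<le> 1" and \<xi>: "0 \<le> \<xi>" "\<xi> \<le> 1"
  shows "- (5*\<zeta>/3) / y \<le> - 2*\<xi>*(1 - \<xi>)*\<eta>^2*t*(2*y - t*\<eta>*(1 - 2*\<xi>)) / (r*y^2)"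
proof -
  \<comment> \<open>The argument gives the sharper constant \<open>3\<zeta>/4\<close>.\<close>
  define p where "p = \<xi>*(1 - \<xi>)*\<eta>^2"
  define q where "q = 2*y - t*\<eta>*(1 - 2*\<xi>)"
  have "r - t \<le> y"
    unfolding y_def using assms by (intro shift_bounds(1)) auto
  then have "t \<le> y" "0 < r" "0 < y"
    using assms by linarith+
  have "0 \<le> p"
    unfolding p_def using \<xi> by simp
  have "p \<le> 1/4 * 1"
    unfolding p_def using mult_one_minus_le_quarter[of \<xi>] \<eta> \<xi>
    by (intro mult_mono) (auto simp: power_le_one)
  have "\<bar>t*\<eta>*(1 - 2*\<xi>)\<bar> \<le> t*1*1"
    unfolding abs_mult using assms by (intro mult_mono) auto
  then have "0 \<le> q" "q \<le> 3*y"
    unfolding q_def using \<open>t \<le> y\<close> by linarith+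
  have "2*\<xi>*(1 - \<xi>)*\<eta>^2*t*(2*y - t*\<eta>*(1 - 2*\<xi>)) = 2*t*(p*q)"
    by (simp add: p_def q_def)
  also have "\<dots> \<le> 2*t*(1/4*(3*y))"
    using \<open>0 \<le> p\<close> \<open>p \<le> 1/4*1\<close> \<open>0 \<le> q\<close> \<open>q \<le> 3*y\<close> \<open>0 < t\<close> by (intro mult_left_mono mult_mono) auto
  finally have "2*\<xi>*(1 - \<xi>)*\<eta>^2*t*(2*y - t*\<eta>*(1 - 2*\<xi>)) / (r*y^2) \<le> (3/2*t*y) / (r*y^2)"
    using \<open>0 < r\<close> \<open>0 < y\<close> by (intro divide_right_mono) auto
  also have "\<dots> = (3*t / (2*r)) / y"
    using \<open>0 < y\<close> by (simp add: power2_eq_square)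
  also have "\<dots> \<le> (5*\<zeta>/3) / y"
    using assms \<open>0 < r\<close> \<open>0 < y\<close> by (intro divide_right_mono) (auto simp: field_simps)
  finally show ?thesis
    by simp
qed

lemma product_derivative_lower_bound:
  fixes K W W' Y' T T' B \<Theta>' \<zeta> y :: real and m :: nat
  assumes "0 < K" "0 < W" "0 < y" "0 \<le> \<zeta>"
    and "0 \<le> T" "T \<le> 1" "0 \<le> T'" "T' \<le> (real m - 1)^2" "\<bar>Y'\<bar> \<le> 1"
    and "- m / y \<le> B" "- (5*\<zeta>/3) / y \<le> \<Theta>'"
  shows "- (E_const m \<zeta> * W / y + \<bar>W'\<bar>) * K \<le> (K*B*W + W'*Y'*K) * T + T'*\<Theta>'*(K*W)"
proof -
  have "- (m / y) \<le> T * B"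
    using assms by (intro mult_unit_interval_lower_bound) auto
  then have kernel: "- (m * W / y) \<le> W * (T * B)"
    using mult_left_mono[of "- (m / y)" "T * B" W] \<open>0 < W\<close> by (simp add: mult.commute)
  have "\<bar>Y' * T\<bar> \<le> 1"
    using assms by (auto simp: abs_mult intro: mult_le_one)
  then have "\<bar>W' * Y' * T\<bar> \<le> \<bar>W'\<bar>"
    by (simp add: abs_mult mult_left_le mult.assoc)
  then have weight: "- \<bar>W'\<bar> \<le> W' * Y' * T"
    by (auto simp: abs_le_iff)
  have "T' * (- (5*\<zeta>/3) / y) \<le> T' * \<Theta>'"
    using assms by (intro mult_left_mono) auto
  moreover have "T' * ((5*\<zeta>/3) / y) \<le> (real m - 1)^2 * ((5*\<zeta>/3) / y)"
    using assms by (intro mult_right_mono) auto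
  ultimately have Theta': "- ((real m - 1)^2 * (5*\<zeta>/3) / y) \<le> T' * \<Theta>'"
    by simp
  have Theta: "- ((real m - 1)^2 * (5*\<zeta>/3) * W / y) \<le> W * (T' * \<Theta>')"
    using mult_left_mono[OF Theta', of W] \<open>0 < W\<close> by (simp add: mult.commute)
  have "E_const m \<zeta> * W / y = m * W / y + W / y / 8 + (real m - 1)^2 * (5*\<zeta>/3) * W / y"
    using \<open>0 < y\<close> by (simp add: E_const_def field_simps)
  moreover have "0 \<le> W / y / 8"
    using assms by simp
  ultimately have "- (E_const m \<zeta> * W / y + \<bar>W'\<bar>) \<le> W * (T * B) + W' * Y' * T + W * (T' * \<Theta>')"
    using kernel weight Theta by linarith
  from mult_right_mono[OF this, of K] \<open>0 < K\<close> show ?thesis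
    by (simp add: algebra_simps)
qed

lemma has_real_derivative_kerK_weight_chebT:
  fixes r t \<eta> \<xi> :: real and w :: "real \<Rightarrow> real"
  defines "y \<equiv> r + t*\<eta> - 2*t*\<eta>*\<xi>"
  assumes "(w has_real_derivative W') (at y)"
    and "0 < r" "0 < y" "0 < r + t*\<eta> - t*\<eta>*\<xi>" "0 < r - \<xi>*t*\<eta>"
  shows "((\<lambda>\<tau>. kerK m r \<tau> \<eta> \<xi> * w (r + \<tau>*\<eta> - 2*\<tau>*\<eta>*\<xi>) * chebT k (Theta r \<tau> \<eta> \<xi>))
      has_real_derivative
        (kerK m r t \<eta> \<xi> * (m * (\<eta> - 2*\<eta>*\<xi>) / y - ((\<eta> - \<eta>*\<xi>) / (r + t*\<eta> - t*\<eta>*\<xi>)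
            - \<xi>*\<eta> / (r - \<xi>*t*\<eta>)) / 2) * w y + W' * (\<eta> - 2*\<eta>*\<xi>) * kerK m r t \<eta> \<xi>)
          * chebT k (Theta r t \<eta> \<xi>)
        + chebT' k (Theta r t \<eta> \<xi>) * (- 2*\<xi>*(1 - \<xi>)*\<eta>^2*t*(2*y - t*\<eta>*(1 - 2*\<xi>)) / (r*y^2))
          * (kerK m r t \<eta> \<xi> * w y)) (at t)"
proof -
  have "((\<lambda>\<tau>. r + \<tau>*\<eta> - 2*\<tau>*\<eta>*\<xi>) has_real_derivative \<eta> - 2*\<eta>*\<xi>) (at t)"
    by (auto intro!: derivative_eq_intros)
  from DERIV_chain2[OF assms(2)[unfolded y_def] this]
  have "((\<lambda>\<tau>. w (r + \<tau>*\<eta> - 2*\<tau>*\<eta>*\<xi>)) has_real_derivative W' * (\<eta> - 2*\<eta>*\<xi>)) (at t)" .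
  moreover have "((\<lambda>\<tau>. chebT k (Theta r \<tau> \<eta> \<xi>)) has_real_derivative
      chebT' k (Theta r t \<eta> \<xi>) * (- 2*\<xi>*(1 - \<xi>)*\<eta>^2*t*(2*y - t*\<eta>*(1 - 2*\<xi>)) / (r*y^2))) (at t)"
    unfolding chebT_def chebT'_def y_def
    by (rule DERIV_chain2[OF poly_DERIV has_real_derivative_Theta]) (use assms in \<open>simp_all add: y_def\<close>)
  ultimately show ?thesis
    using has_real_derivative_kerK[of r t \<eta> \<xi> m] assms(3-6) unfolding y_def
    by (intro DERIV_mult) simp_all
qed

theorem proposition5p2:
  fixes m :: nat and R \<zeta> \<eta>m \<delta> :: real and w w' :: "real \<Rightarrow> real"
    and r t \<eta> \<xi> :: real
  assumes m: "m \<ge> 2"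
    and R: "R > 0"
    and w_deriv: "\<And>y. y > 0 \<Longrightarrow> (w has_real_derivative w' y) (at y)"
    and w'_cont: "continuous_on {0<..} w'"
    and w_pos: "\<And>y. y \<ge> R \<Longrightarrow> w y > 0"
    and \<zeta>: "0 < \<zeta>" "\<zeta> \<le> 1"
    and \<zeta>_prop: "\<And>z. 1 / (1 + \<zeta>) \<le> z \<Longrightarrow> z \<le> 1 \<Longrightarrow>
         1/2 \<le> chebT (m - 1) z \<and> chebT (m - 1) z \<le> 1 \<and>
         0 < chebT' (m - 1) z \<and> chebT' (m - 1) z \<le> (real m - 1)^2"
    and \<eta>m: "0 < \<eta>m" "\<eta>m \<le> 1"
    and \<eta>m_prop: "\<And>z. 1 / (1 + \<eta>m) \<le> z \<Longrightarrow> z \<le> 1 \<Longrightarrow>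
         1/2 \<le> legP (m - 1) z \<and>
         0 < legP' (m - 1) z \<and> legP' (m - 1) z \<le> real m * (real m - 1) / 2"
    and \<delta>: "\<delta> = max (2 / \<eta>m) (2 / \<zeta>)"
    and \<xi>: "0 \<le> \<xi>" "\<xi> \<le> 1"
    and \<eta>: "0 \<le> \<eta>" "\<eta> \<le> 1"
    and rt: "r > 0" "t > 0" "r - t \<ge> max R (\<delta> * t)" "max R (\<delta> * t) > 0"
  shows "\<exists>D. ((\<lambda>\<tau>. kerK m r \<tau> \<eta> \<xi> * w (r + \<tau>*\<eta> - 2*\<tau>*\<eta>*\<xi>) * chebT (m - 1) (Theta r \<tau> \<eta> \<xi>))
              has_real_derivative D) (at t) \<and>
            D \<ge> - (E_const m \<zeta> * w (r + t*\<eta> - 2*t*\<eta>*\<xi>) / (r + t*\<eta> - 2*t*\<eta>*\<xi>)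
                   + \<bar>w' (r + t*\<eta> - 2*t*\<eta>*\<xi>)\<bar>) * kerK m r t \<eta> \<xi>"
proof -
  define y where "y = r + t*\<eta> - 2*t*\<eta>*\<xi>"
  define B where "B = m * (\<eta> - 2*\<eta>*\<xi>) / y - ((\<eta> - \<eta>*\<xi>) / (r + t*\<eta> - t*\<eta>*\<xi>) - \<xi>*\<eta> / (r - \<xi>*t*\<eta>)) / 2"
  define \<Theta>' where "\<Theta>' = - 2*\<xi>*(1 - \<xi>)*\<eta>^2*t*(2*y - t*\<eta>*(1 - 2*\<xi>)) / (r*y^2)"
  have "2 / \<zeta> \<le> \<delta>" "\<delta> * t \<le> r - t"
    using \<delta> rt(3) by auto
  note Sigma = Sigma1_scale_bounds[OF \<zeta> rt(2) this]
  have "R \<le> r - t"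
    using rt(3) by simp
  with shift_bounds[OF less_imp_le[OF rt(2)] \<eta> \<xi>, of r] R
  have y: "R \<le> y" "0 < y" and ab: "0 < r + t*\<eta> - t*\<eta>*\<xi>" "0 < r - \<xi>*t*\<eta>"
    unfolding y_def by linarith+
  have deriv: "((\<lambda>\<tau>. kerK m r \<tau> \<eta> \<xi> * w (r + \<tau>*\<eta> - 2*\<tau>*\<eta>*\<xi>) * chebT (m - 1) (Theta r \<tau> \<eta> \<xi>))
      has_real_derivative (kerK m r t \<eta> \<xi> * B * w y + w' y * (\<eta> - 2*\<eta>*\<xi>) * kerK m r t \<eta> \<xi>)
        * chebT (m - 1) (Theta r t \<eta> \<xi>) + chebT' (m - 1) (Theta r t \<eta> \<xi>) * \<Theta>' * (kerK m r t \<eta> \<xi> * w y)) (at t)"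
    (is "(_ has_real_derivative ?D) _")
    unfolding B_def \<Theta>'_def y_def
    by (rule has_real_derivative_kerK_weight_chebT) (use w_deriv y ab rt(1) in \<open>simp_all add: y_def\<close>)
  have "0 < kerK m r t \<eta> \<xi>"
    unfolding kerK_def using y ab by (simp add: y_def)
  moreover have "\<bar>\<eta> * (1 - 2*\<xi>)\<bar> \<le> 1 * 1"
    unfolding abs_mult using \<eta> \<xi> by (intro mult_mono) auto
  moreover have "- real m / y \<le> B"
    using kerK_log_derivative_lower_bound[of "real m" t \<eta> \<xi> r] m rt(2) \<eta> \<xi> y(2) ab
    unfolding B_def y_def by simp
  moreover have "- (5*\<zeta>/3) / y \<le> \<Theta>'"
    using Theta_derivative_lower_bound[OF rt(2) Sigma \<eta> \<xi>] unfolding \<Theta>'_def y_def .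
  moreover note \<zeta>_prop[OF Theta_bounds[OF \<zeta> rt(2) Sigma \<eta> \<xi>]]
  ultimately have "- (E_const m \<zeta> * w y / y + \<bar>w' y\<bar>) * kerK m r t \<eta> \<xi> \<le> ?D"
    using \<zeta>(1) w_pos[OF y(1)] y(2)
    by (intro product_derivative_lower_bound) (auto simp: algebra_simps)
  with deriv show ?thesis
    unfolding y_def by blast
qed

end
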